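(* Let $a\ge2$ and $F=\breve F(a,a,a)$, with elements $x_1,\dots,x_{3a-1}$. Then, as functions on $\mathcal J(F)$, \begin{multline*} \chi_{x_a}-\chi_{x_{2a}}=\sum_{i=1}^{a}(-iT_i)-(a-1)T_{2a}+\sum_{i=1}^{a-1}(-iT_{3a-i})\\+\sum_{i=1}^{a-1}\sum_{j=0}^i aT_{\{i,2a+j\}}+\sum_{j=1}^{a-1}aT_{\{a,2a+j\}}+\sum_{i=1}^{a-1}(-aT_{\{i,2a-i,2a+i\}}). \end{multline*}
   Context: The fence $\breve F(a,a,a)$ is the poset on $\{x_1,\dots,x_{3a-1}\}$ with cover relations $x_1\lessdot x_2\lessdot\dots\lessdot x_a$, $x_a\gtrdot x_{a+1}\gtrdot\dots\gtrdot x_{2a}$, $x_{2a}\lessdot x_{2a+1}\lessdot\dots\lessdot x_{3a-1}$. $\mathcal J(F)$ is the set of order ideals. $\chi_q(I)=1$ if $q\in\max(I)$, else $0$. For an antichain $A\subseteq F$ the antichain toggleability statistic is $T_A(I)=1$ if $A\subseteq\min(F\setminus I)$, $-1$ if $A\subseteq\max(I)$, and $0$ otherwise. Notation: $T_i=T_{\{x_i\}}$, and $T_{\{i,j\}}=T_{\{x_i,x_j\}}$, $T_{\{i,j,k\}}=T_{\{x_i,x_j,x_k\}}$ (these index sets are antichains). *)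

theory Defs
  imports Main
begin

definition fence :: "nat \<Rightarrow> nat set" where
  "fence a = {1..3*a-1}"

text \<open>Cover relation: cover a i j means x_i is covered by x_j.\<close>
definition cover :: "nat \<Rightarrow> nat \<Rightarrow> nat \<Rightarrow> bool" where
  "cover a i j \<longleftrightarrow>
     (1 \<le> i \<and> i < a \<and> j = i + 1) \<or>
     (a \<le> j \<and> j < 2*a \<and> i = j + 1) \<or>
     (2*a \<le> i \<and> i < 3*a - 1 \<and> j = i + 1)"

definition fleq :: "nat \<Rightarrow> nat \<Rightarrow> nat \<Rightarrow> bool" where
  "fleq a i j \<longleftrightarrow> i \<in> fence a \<and> j \<in> fence a \<and> (cover a)\<^sup>*\<^sup>* i j"

definition ideals :: "nat \<Rightarrow> nat set set" where
  "ideals a = {I. I \<subseteq> fence a \<and> (\<forall>j\<in>I. \<forall>i. fleq a i j \<longrightarrow> i \<in> I)}"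

definition maxs :: "nat \<Rightarrow> nat set \<Rightarrow> nat set" where
  "maxs a S = {q \<in> S. \<forall>r\<in>S. fleq a q r \<longrightarrow> r = q}"

definition mins :: "nat \<Rightarrow> nat set \<Rightarrow> nat set" where
  "mins a S = {q \<in> S. \<forall>r\<in>S. fleq a r q \<longrightarrow> r = q}"

definition chi :: "nat \<Rightarrow> nat \<Rightarrow> nat set \<Rightarrow> int" where
  "chi a q I = (if q \<in> maxs a I then 1 else 0)"

definition tog :: "nat \<Rightarrow> nat set \<Rightarrow> nat set \<Rightarrow> int" where
  "tog a A I = (if A \<subseteq> mins a (fence a - I) then 1
                else if A \<subseteq> maxs a I then -1 else 0)"

end

theory Submission
  imports Defs
begin

text \<open>An order ideal of the fence is determined by how far it reaches along each of the three
  chains x_1 < ... < x_{a-1}, x_{2a} < ... < x_{a+1} and x_{2a+1} < ... < x_{3a-1}, together with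
  whether it contains the peak x_a. An element can be toggled into (out of) the ideal only if it
  is the first element above (the last element of) the ideal's part of its chain, so in each of
  the six sums at most two indices contribute. Every sum thus has a closed form in these
  coordinates, and the identity becomes a finite case distinction on them.\<close>

lemma lower_cover_iff:
  "cover a r k \<longleftrightarrow> (2 \<le> k \<and> k \<le> a \<and> r = k - 1) \<or> (a \<le> k \<and> k < 2*a \<and> r = k + 1)
                    \<or> (2*a + 1 \<le> k \<and> k \<le> 3*a - 1 \<and> r = k - 1)"
  unfolding cover_def by auto

lemma upper_cover_iff:
  "cover a k r \<longleftrightarrow> (1 \<le> k \<and> k < a \<and> r = k + 1) \<or> (a + 1 \<le> k \<and> k \<le> 2*a \<and> r = k - 1)
                    \<or> (2*a \<le> k \<and> k < 3*a - 1 \<and> r = k + 1)"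
  unfolding cover_def by auto

lemma all_lower_covers_iff:
  "(\<forall>r. cover a r k \<longrightarrow> P r) \<longleftrightarrow>
     (2 \<le> k \<and> k \<le> a \<longrightarrow> P (k - 1)) \<and> (a \<le> k \<and> k < 2*a \<longrightarrow> P (k + 1))
     \<and> (2*a + 1 \<le> k \<and> k \<le> 3*a - 1 \<longrightarrow> P (k - 1))"
  unfolding lower_cover_iff by auto

lemma all_upper_covers_iff:
  "(\<forall>r. cover a k r \<longrightarrow> P r) \<longleftrightarrow>
     (1 \<le> k \<and> k < a \<longrightarrow> P (k + 1)) \<and> (a + 1 \<le> k \<and> k \<le> 2*a \<longrightarrow> P (k - 1))
     \<and> (2*a \<le> k \<and> k < 3*a - 1 \<longrightarrow> P (k + 1))"
  unfolding upper_cover_iff by auto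

lemma mem_fenceI: "1 \<le> x \<Longrightarrow> x \<le> 3*a - 1 \<Longrightarrow> x \<in> fence a"
  unfolding fence_def by auto

lemma cover_in_fence: "cover a i j \<Longrightarrow> i \<in> fence a \<and> j \<in> fence a"
  unfolding cover_def fence_def by auto

lemma cover_irrefl: "\<not> cover a i i"
  unfolding cover_def by auto

lemma cover_imp_fleq: "cover a i j \<Longrightarrow> fleq a i j"
  unfolding fleq_def using cover_in_fence by auto

lemma ideals_subset_fence: "I \<in> ideals a \<Longrightarrow> I \<subseteq> fence a"
  unfolding ideals_def by auto

lemma ideal_fleq_closed: "I \<in> ideals a \<Longrightarrow> j \<in> I \<Longrightarrow> fleq a i j \<Longrightarrow> i \<in> I"
  unfolding ideals_def by auto

lemma ideal_cover_closed: "I \<in> ideals a \<Longrightarrow> j \<in> I \<Longrightarrow> cover a i j \<Longrightarrow> i \<in> I"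
  using ideal_fleq_closed cover_imp_fleq by blast

lemma mem_maxs_ideal_iff:
  assumes "I \<in> ideals a"
  shows "x \<in> maxs a I \<longleftrightarrow> x \<in> I \<and> (\<forall>r. cover a x r \<longrightarrow> r \<notin> I)"
proof
  assume x: "x \<in> maxs a I"
  have "r \<notin> I" if "cover a x r" for r
    using x that cover_imp_fleq cover_irrefl unfolding maxs_def by blast
  with x show "x \<in> I \<and> (\<forall>r. cover a x r \<longrightarrow> r \<notin> I)"
    unfolding maxs_def by blast
next
  assume x: "x \<in> I \<and> (\<forall>r. cover a x r \<longrightarrow> r \<notin> I)"
  have "r = x" if "r \<in> I" "fleq a x r" for r
  proof (rule ccontr)
    assume "r \<noteq> x"
    with \<open>fleq a x r\<close> obtain y where y: "cover a x y" "(cover a)\<^sup>*\<^sup>* y r"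
      unfolding fleq_def by (metis converse_rtranclpE)
    then have "fleq a y r"
      using cover_in_fence \<open>r \<in> I\<close> ideals_subset_fence[OF assms] unfolding fleq_def by blast
    then have "y \<in> I" using ideal_fleq_closed[OF assms \<open>r \<in> I\<close>] by blast
    with x y(1) show False by blast
  qed
  with x show "x \<in> maxs a I" unfolding maxs_def by blast
qed

lemma mem_mins_compl_ideal_iff:
  assumes "I \<in> ideals a"
  shows "x \<in> mins a (fence a - I) \<longleftrightarrow> x \<in> fence a \<and> x \<notin> I \<and> (\<forall>r. cover a r x \<longrightarrow> r \<in> I)"
proof
  assume x: "x \<in> mins a (fence a - I)"
  have "r \<in> I" if "cover a r x" for r
    using x that cover_imp_fleq cover_irrefl cover_in_fence unfolding mins_def by blast
  with x show "x \<in> fence a \<and> x \<notin> I \<and> (\<forall>r. cover a r x \<longrightarrow> r \<in> I)"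
    unfolding mins_def by blast
next
  assume x: "x \<in> fence a \<and> x \<notin> I \<and> (\<forall>r. cover a r x \<longrightarrow> r \<in> I)"
  have "r = x" if "r \<notin> I" "fleq a r x" for r
  proof (rule ccontr)
    assume "r \<noteq> x"
    with \<open>fleq a r x\<close> obtain y where y: "(cover a)\<^sup>*\<^sup>* r y" "cover a y x"
      unfolding fleq_def by (metis rtranclp.cases)
    then have "fleq a r y" using cover_in_fence \<open>fleq a r x\<close> unfolding fleq_def by blast
    moreover have "y \<in> I" using x y(2) by blast
    ultimately show False using ideal_fleq_closed[OF assms] \<open>r \<notin> I\<close> by blast
  qed
  with x show "x \<in> mins a (fence a - I)" unfolding mins_def by blast
qed

lemma sum_two_point_supported:
  assumes "finite A" and "\<And>i. i \<in> A \<Longrightarrow> f i = (if i = u then c else 0) + (if i = v then d else 0)"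
  shows "sum f A = (if u \<in> A then c else 0) + (if v \<in> A then d else 0)"
  using assms by (simp add: sum.distrib cong: sum.cong)

lemma initial_segment_if_closed_below:
  assumes "\<And>i. 1 \<le> i \<Longrightarrow> i < n \<Longrightarrow> P (Suc i) \<Longrightarrow> P i"
  shows "\<exists>p\<le>n. \<forall>i. 1 \<le> i \<and> i \<le> n \<longrightarrow> (P i \<longleftrightarrow> i \<le> p)"
  using assms
proof (induction n)
  case 0
  then show ?case by auto
next
  case (Suc n)
  then obtain p where p: "p \<le> n" "\<forall>i. 1 \<le> i \<and> i \<le> n \<longrightarrow> (P i \<longleftrightarrow> i \<le> p)"
    by auto
  show ?case
  proof (cases "P (Suc n)")
    case True
    have "P i" if "1 \<le> i" "i \<le> Suc n" for i
      using \<open>i \<le> Suc n\<close> True by (rule inc_induct) (use Suc.prems that in auto)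
    then show ?thesis by (intro exI[of _ "Suc n"]) auto
  next
    case False
    then show ?thesis using p by (intro exI[of _ p]) (auto simp: le_Suc_eq)
  qed
qed

lemma ideal_meets_chain_in_initial_segment:
  assumes "I \<in> ideals a" and "\<And>i. 1 \<le> i \<Longrightarrow> i < n \<Longrightarrow> cover a (f i) (f (Suc i))"
  obtains p where "p \<le> n" "\<And>i. 1 \<le> i \<Longrightarrow> i \<le> n \<Longrightarrow> f i \<in> I \<longleftrightarrow> i \<le> p"
  using initial_segment_if_closed_below[of n "\<lambda>i. f i \<in> I"] ideal_cover_closed[OF assms(1)] assms(2)
  by blast

text \<open>Coordinates of an order ideal: p, q and r count its elements on the left chain
  x_1 < ... < x_{a-1}, on the middle chain x_{2a} < ... < x_{a+1} (counted from the valley x_{2a})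
  and on the right chain x_{2a+1} < ... < x_{3a-1}; b records whether it contains the peak x_a.\<close>
definition fence_ideal :: "nat \<Rightarrow> nat \<Rightarrow> nat \<Rightarrow> nat \<Rightarrow> bool \<Rightarrow> nat set" where
  "fence_ideal a p q r b = {1..p} \<union> {k. k = a \<and> b} \<union> {2*a + 1 - q..2*a} \<union> {2*a<..2*a + r}"

lemma ideal_eq_fence_ideal:
  assumes a: "a \<ge> 2" and I: "I \<in> ideals a"
  obtains p q r where "p \<le> a - 1" "q \<le> a" "r \<le> a - 1" "I = fence_ideal a p q r (a \<in> I)"
proof -
  obtain p where p: "p \<le> a - 1" "\<And>i. 1 \<le> i \<Longrightarrow> i \<le> a - 1 \<Longrightarrow> i \<in> I \<longleftrightarrow> i \<le> p"
    by (rule ideal_meets_chain_in_initial_segment[OF I, of "a - 1" id]) (auto simp: cover_def)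
  obtain q where q: "q \<le> a" "\<And>m. 1 \<le> m \<Longrightarrow> m \<le> a \<Longrightarrow> 2*a + 1 - m \<in> I \<longleftrightarrow> m \<le> q"
    by (rule ideal_meets_chain_in_initial_segment[OF I, of a "\<lambda>m. 2*a + 1 - m"]) (auto simp: cover_def)
  obtain r where r: "r \<le> a - 1" "\<And>j. 1 \<le> j \<Longrightarrow> j \<le> a - 1 \<Longrightarrow> 2*a + j \<in> I \<longleftrightarrow> j \<le> r"
    by (rule ideal_meets_chain_in_initial_segment[OF I, of "a - 1" "\<lambda>j. 2*a + j"]) (auto simp: cover_def)
  have "k \<in> I \<longleftrightarrow> k \<in> fence_ideal a p q r (a \<in> I)" for k
  proof -
    consider "k = 0 \<or> k > 3*a - 1" | "1 \<le> k" "k < a" | "k = a" | "a < k" "k \<le> 2*a"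
      | "2*a < k" "k \<le> 3*a - 1" by linarith
    then show ?thesis
    proof cases
      case 1
      then have "k \<notin> I" using ideals_subset_fence[OF I] unfolding fence_def by auto
      with 1 show ?thesis using p(1) q(1) r(1) a unfolding fence_ideal_def by auto
    next
      case 2
      then show ?thesis using p(2)[of k] q(1) unfolding fence_ideal_def by auto
    next
      case 3
      then show ?thesis using p(1) q(1) a unfolding fence_ideal_def by auto
    next
      case 4
      then have "2*a + 1 - (2*a + 1 - k) = k" by auto
      with 4 q(2)[of "2*a + 1 - k"] show ?thesis using p(1) unfolding fence_ideal_def by auto
    next
      case 5
      with r(2)[of "k - 2*a"] show ?thesis using p(1) unfolding fence_ideal_def by auto
    qed
  qed
  then show thesis using that p(1) q(1) r(1) by blast
qed

locale fence_ideal_coords =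
  fixes a p q r :: nat and b :: bool and I :: "nat set"
  assumes a_ge_2: "a \<ge> 2" and ideal: "I \<in> ideals a"
    and p_le: "p \<le> a - 1" and q_le: "q \<le> a" and r_le: "r \<le> a - 1"
    and I_eq: "I = fence_ideal a p q r b"
begin

abbreviation addable :: "nat \<Rightarrow> bool" where
  "addable x \<equiv> x \<in> mins a (fence a - I)"

abbreviation removable :: "nat \<Rightarrow> bool" where
  "removable x \<equiv> x \<in> maxs a I"

lemma mem_left_iff: "1 \<le> k \<Longrightarrow> k \<le> a - 1 \<Longrightarrow> k \<in> I \<longleftrightarrow> k \<le> p"
  using q_le unfolding I_eq fence_ideal_def by auto

lemma mem_peak_iff: "a \<in> I \<longleftrightarrow> b"
  using a_ge_2 p_le q_le unfolding I_eq fence_ideal_def by auto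

lemma mem_middle_iff: "1 \<le> m \<Longrightarrow> m \<le> a \<Longrightarrow> 2*a + 1 - m \<in> I \<longleftrightarrow> m \<le> q"
  using p_le unfolding I_eq fence_ideal_def by auto

lemma mem_valley_iff: "2*a \<in> I \<longleftrightarrow> 1 \<le> q"
  using mem_middle_iff[of 1] a_ge_2 by simp

lemma mem_right_iff: "1 \<le> j \<Longrightarrow> 2*a + j \<in> I \<longleftrightarrow> j \<le> r"
  using p_le unfolding I_eq fence_ideal_def by auto

lemma peak_imp_full: "b \<Longrightarrow> p = a - 1 \<and> q = a"
proof -
  assume b
  then have "a \<in> I" using mem_peak_iff by simp
  moreover have "cover a (a - 1) a" "cover a (a + 1) a" using a_ge_2 unfolding cover_def by auto
  ultimately have "a - 1 \<in> I" "2*a + 1 - a \<in> I" using ideal_cover_closed[OF ideal] by auto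
  then show ?thesis using mem_left_iff[of "a - 1"] mem_middle_iff[of a] a_ge_2 p_le q_le by auto
qed

lemma right_imp_valley: "1 \<le> r \<Longrightarrow> 1 \<le> q"
proof -
  assume "1 \<le> r"
  then have "2*a + 1 \<in> I" using mem_right_iff[of 1] by simp
  moreover have "cover a (2*a) (2*a + 1)" using a_ge_2 unfolding cover_def by auto
  ultimately have "2*a \<in> I" using ideal_cover_closed[OF ideal] by blast
  then show ?thesis using mem_valley_iff by simp
qed

lemma addable_iff:
  "addable x \<longleftrightarrow> x \<in> fence a \<and> x \<notin> I \<and> (2 \<le> x \<and> x \<le> a \<longrightarrow> x - 1 \<in> I)
     \<and> (a \<le> x \<and> x < 2*a \<longrightarrow> x + 1 \<in> I) \<and> (2*a + 1 \<le> x \<and> x \<le> 3*a - 1 \<longrightarrow> x - 1 \<in> I)"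
  unfolding mem_mins_compl_ideal_iff[OF ideal] all_lower_covers_iff ..

lemma removable_iff:
  "removable x \<longleftrightarrow> x \<in> I \<and> (1 \<le> x \<and> x < a \<longrightarrow> x + 1 \<notin> I)
     \<and> (a + 1 \<le> x \<and> x \<le> 2*a \<longrightarrow> x - 1 \<notin> I) \<and> (2*a \<le> x \<and> x < 3*a - 1 \<longrightarrow> x + 1 \<notin> I)"
  unfolding mem_maxs_ideal_iff[OF ideal] all_upper_covers_iff ..

lemma addable_not_removable: "addable x \<Longrightarrow> \<not> removable x"
  unfolding mins_def maxs_def by auto

lemma addable_left_iff:
  assumes "1 \<le> i" "i \<le> a - 1"
  shows "addable i \<longleftrightarrow> i = p + 1"
proof -
  have "i - 1 \<in> I \<longleftrightarrow> i - 1 \<le> p" if "2 \<le> i" using mem_left_iff[of "i - 1"] that assms by auto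
  then show ?thesis
    unfolding addable_iff using mem_left_iff[of i] mem_fenceI[of i] assms a_ge_2 by auto
qed

lemma removable_left_iff:
  assumes "1 \<le> i" "i \<le> a - 1"
  shows "removable i \<longleftrightarrow> i = p \<and> \<not> b"
proof -
  have "i + 1 \<in> I \<longleftrightarrow> (if i + 1 = a then b else i + 1 \<le> p)"
    using mem_left_iff[of "i + 1"] mem_peak_iff assms by auto
  then show ?thesis
    unfolding removable_iff using mem_left_iff[of i] peak_imp_full assms p_le by auto
qed

lemma addable_peak_iff: "addable a \<longleftrightarrow> \<not> b \<and> p = a - 1 \<and> q = a"
proof -
  have "a - 1 \<in> I \<longleftrightarrow> a - 1 \<le> p" "a + 1 \<in> I \<longleftrightarrow> a \<le> q"
    using mem_left_iff[of "a - 1"] mem_middle_iff[of a] a_ge_2 by (auto simp: mult_2)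
  then show ?thesis
    unfolding addable_iff using mem_peak_iff mem_fenceI[of a] a_ge_2 p_le q_le by auto
qed

lemma removable_peak_iff: "removable a \<longleftrightarrow> b"
  unfolding removable_iff using mem_peak_iff a_ge_2 by auto

lemma addable_middle_iff:
  assumes "1 \<le> i" "i \<le> a - 1"
  shows "addable (2*a - i) \<longleftrightarrow> q = i"
proof -
  have "2*a - i \<in> I \<longleftrightarrow> i + 1 \<le> q" "2*a - i + 1 \<in> I \<longleftrightarrow> i \<le> q"
    using mem_middle_iff[of "i + 1"] mem_middle_iff[of i] assms by (auto simp: Suc_diff_le)
  then show ?thesis
    unfolding addable_iff using mem_fenceI[of "2*a - i"] assms by auto
qed

lemma removable_middle_iff:
  assumes "1 \<le> i" "i \<le> a - 1"
  shows "removable (2*a - i) \<longleftrightarrow> q = i + 1 \<and> (i = a - 1 \<longrightarrow> \<not> b)"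
proof -
  have "2*a - i \<in> I \<longleftrightarrow> i + 1 \<le> q"
    using mem_middle_iff[of "i + 1"] assms by auto
  moreover have "2*a - i - 1 \<in> I \<longleftrightarrow> (if i = a - 1 then b else i + 2 \<le> q)"
    using mem_middle_iff[of "i + 2"] mem_peak_iff assms by auto
  ultimately show ?thesis
    unfolding removable_iff using assms q_le by auto
qed

lemma addable_right_iff:
  assumes "j \<le> a - 1"
  shows "addable (2*a + j) \<longleftrightarrow> (if j = 0 then q = 0 else j = r + 1 \<and> 1 \<le> q)"
proof -
  have fence: "2*a + j \<in> fence a" using mem_fenceI assms a_ge_2 by auto
  consider "j = 0" | "j = 1" | "2 \<le> j" by linarith
  then show ?thesis
  proof cases
    case 1
    then show ?thesis unfolding addable_iff using mem_valley_iff fence a_ge_2 by auto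
  next
    case 2
    then show ?thesis
      unfolding addable_iff using mem_right_iff[of 1] mem_valley_iff fence right_imp_valley a_ge_2
      by auto
  next
    case 3
    then have "2*a + j - 1 \<in> I \<longleftrightarrow> j - 1 \<le> r" using mem_right_iff[of "j - 1"] by auto
    then show ?thesis
      unfolding addable_iff using 3 mem_right_iff[of j] fence right_imp_valley assms by auto
  qed
qed

lemma removable_right_iff:
  assumes "j \<le> a - 1"
  shows "removable (2*a + j) \<longleftrightarrow> j = r \<and> (j = 0 \<longrightarrow> q = 1)"
proof (cases "j = 0")
  case True
  have "2*a - 1 \<in> I \<longleftrightarrow> 2 \<le> q" using mem_middle_iff[of 2] a_ge_2 by auto
  then show ?thesis
    unfolding removable_iff using True mem_valley_iff mem_right_iff[of 1] a_ge_2 by auto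
next
  case False
  have "2*a + j < 3*a - 1 \<or> j = a - 1" using assms a_ge_2 by auto
  then show ?thesis
    unfolding removable_iff using False mem_right_iff[of j] mem_right_iff[of "j + 1"] r_le
    by auto
qed

lemma tog_eq: "tog a A I = (if \<forall>x\<in>A. addable x then 1 else if \<forall>x\<in>A. removable x then -1 else 0)"
  unfolding tog_def by (simp add: subset_iff)

lemma chi_peak: "chi a a I = (if b then 1 else 0)"
  using removable_peak_iff unfolding chi_def by simp

lemma chi_valley: "chi a (2*a) I = (if q = 1 \<and> r = 0 then 1 else 0)"
  using removable_right_iff[of 0] unfolding chi_def by simp

lemma tog_valley: "tog a {2*a} I = (if q = 0 then 1 else if q = 1 \<and> r = 0 then -1 else 0)"
  using addable_right_iff[of 0] removable_right_iff[of 0] by (simp add: tog_eq)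

lemma sum_left_singletons:
  "(\<Sum>i=1..a. - int i * tog a {i} I) =
     (if p + 1 \<in> {1..a-1} then - int (p + 1) else 0) + (if p \<in> {1..a-1} then (if b then 0 else int p) else 0)
     + (if \<not> b \<and> p = a - 1 \<and> q = a then - int a else 0) + (if b then int a else 0)"
proof -
  have "{1..a} = insert a {1..a-1}" using a_ge_2 by auto
  then have "(\<Sum>i=1..a. - int i * tog a {i} I) =
      - int a * tog a {a} I + (\<Sum>i=1..a-1. - int i * tog a {i} I)"
    by (simp only:) (rule sum.insert, auto)
  moreover have "- int a * tog a {a} I =
      (if \<not> b \<and> p = a - 1 \<and> q = a then - int a else 0) + (if b then int a else 0)"
    by (auto simp: tog_eq addable_peak_iff removable_peak_iff)
  moreover have "(\<Sum>i=1..a-1. - int i * tog a {i} I) =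
      (if p + 1 \<in> {1..a-1} then - int (p + 1) else 0) + (if p \<in> {1..a-1} then (if b then 0 else int p) else 0)"
    by (rule sum_two_point_supported) (auto simp: tog_eq addable_left_iff removable_left_iff)
  ultimately show ?thesis by simp
qed

lemma sum_right_singletons:
  "(\<Sum>i=1..a-1. - int i * tog a {3*a - i} I) =
     (if a - r - 1 \<in> {1..a-1} then (if 1 \<le> q then - int (a - r - 1) else 0) else 0)
     + (if a - r \<in> {1..a-1} then int (a - r) else 0)"
proof (rule sum_two_point_supported)
  fix i assume i: "i \<in> {1..a-1}"
  then have "3*a - i = 2*a + (a - i)" "a - i \<le> a - 1" "a - i \<noteq> 0"
    "a - i = r + 1 \<longleftrightarrow> i = a - r - 1" "a - i = r \<longleftrightarrow> i = a - r"
    using r_le by auto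
  then show "- int i * tog a {3*a - i} I =
      (if i = a - r - 1 then (if 1 \<le> q then - int (a - r - 1) else 0) else 0)
      + (if i = a - r then int (a - r) else 0)"
    using addable_right_iff[of "a - i"] removable_right_iff[of "a - i"] by (auto simp: tog_eq)
qed simp

lemma sum_pairs_with_left:
  assumes i: "1 \<le> i" "i \<le> a - 1"
  shows "(\<Sum>j=0..i. int a * tog a {i, 2*a + j} I) =
    (if i = p + 1 then (if q = 0 then int a else 0) + (if r \<le> p \<and> 1 \<le> q then int a else 0) else 0)
    + (if i = p then (if \<not> b then (if q = 1 \<and> r = 0 then - int a else 0)
                                  + (if 1 \<le> r \<and> r \<le> p then - int a else 0) else 0) else 0)"
    (is "_ = ?rhs")
proof -
  let ?A = "addable i" and ?R = "removable i"
  have "(\<Sum>j=0..i. int a * tog a {i, 2*a + j} I) = (\<Sum>j=0..i.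
        (if j = 0 then (if ?A \<and> q = 0 then int a else if ?R \<and> q = 1 \<and> r = 0 then - int a else 0) else 0)
      + (if j = r + 1 then (if ?A \<and> 1 \<le> q then int a else 0) else 0)
      + (if j = r then (if ?R \<and> 1 \<le> r then - int a else 0) else 0))"
  proof (rule sum.cong)
    fix j assume "j \<in> {0..i}"
    then have "j \<le> a - 1" using i by auto
    then show "int a * tog a {i, 2*a + j} I =
        (if j = 0 then (if ?A \<and> q = 0 then int a else if ?R \<and> q = 1 \<and> r = 0 then - int a else 0) else 0)
      + (if j = r + 1 then (if ?A \<and> 1 \<le> q then int a else 0) else 0)
      + (if j = r then (if ?R \<and> 1 \<le> r then - int a else 0) else 0)"
      using addable_right_iff[of j] removable_right_iff[of j] addable_not_removable[of i]
      by (auto simp: tog_eq)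
  qed simp
  also have "\<dots> = ?rhs"
    unfolding sum.distrib sum.delta[OF finite_atLeastAtMost]
    unfolding addable_left_iff[OF i] removable_left_iff[OF i] by auto
  finally show ?thesis .
qed

lemma sum_left_right_pairs:
  "(\<Sum>i=1..a-1. \<Sum>j=0..i. int a * tog a {i, 2*a + j} I) =
    (if p + 1 \<in> {1..a-1} then (if q = 0 then int a else 0) + (if r \<le> p \<and> 1 \<le> q then int a else 0) else 0)
    + (if p \<in> {1..a-1} then (if \<not> b then (if q = 1 \<and> r = 0 then - int a else 0)
                                         + (if 1 \<le> r \<and> r \<le> p then - int a else 0) else 0) else 0)"
  by (rule sum_two_point_supported) (auto simp: sum_pairs_with_left)

lemma sum_peak_right_pairs:
  "(\<Sum>j=1..a-1. int a * tog a {a, 2*a + j} I) =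
     (if r + 1 \<in> {1..a-1} then (if \<not> b \<and> p = a - 1 \<and> q = a then int a else 0) else 0)
     + (if r \<in> {1..a-1} then (if b then - int a else 0) else 0)"
proof (rule sum_two_point_supported)
  fix j assume "j \<in> {1..a-1}"
  then show "int a * tog a {a, 2*a + j} I =
      (if j = r + 1 then (if \<not> b \<and> p = a - 1 \<and> q = a then int a else 0) else 0)
      + (if j = r then (if b then - int a else 0) else 0)"
    using addable_right_iff[of j] removable_right_iff[of j] addable_peak_iff removable_peak_iff
    by (auto simp: tog_eq)
qed simp

lemma sum_triples:
  "(\<Sum>i=1..a-1. - int a * tog a {i, 2*a - i, 2*a + i} I) =
     (if p + 1 \<in> {1..a-1} then (if q = p + 1 \<and> r = p then - int a else 0) else 0)
     + (if p \<in> {1..a-1} then (if \<not> b \<and> q = p + 1 \<and> r = p then int a else 0) else 0)"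
  by (rule sum_two_point_supported)
    (auto simp: tog_eq addable_left_iff removable_left_iff addable_middle_iff removable_middle_iff
      addable_right_iff removable_right_iff)

lemma chi_difference_expansion:
  "chi a a I - chi a (2*a) I =
      (\<Sum>i=1..a. - int i * tog a {i} I)
    - (int a - 1) * tog a {2*a} I
    + (\<Sum>i=1..a-1. - int i * tog a {3*a - i} I)
    + (\<Sum>i=1..a-1. \<Sum>j=0..i. int a * tog a {i, 2*a + j} I)
    + (\<Sum>j=1..a-1. int a * tog a {a, 2*a + j} I)
    + (\<Sum>i=1..a-1. - int a * tog a {i, 2*a - i, 2*a + i} I)"
proof -
  have index_ranges:
    "p + 1 \<in> {1..a-1} \<longleftrightarrow> p + 2 \<le> a" "p \<in> {1..a-1} \<longleftrightarrow> 1 \<le> p" "p = a - 1 \<longleftrightarrow> p + 1 = a"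
    "r + 1 \<in> {1..a-1} \<longleftrightarrow> r + 2 \<le> a" "r \<in> {1..a-1} \<longleftrightarrow> 1 \<le> r"
    "a - r - 1 \<in> {1..a-1} \<longleftrightarrow> r + 2 \<le> a" "a - r \<in> {1..a-1} \<longleftrightarrow> 1 \<le> r"
    "int (a - r - 1) = int a - int r - 1" "int (a - r) = int a - int r"
    using a_ge_2 p_le r_le by auto
  have constraints: "b \<longrightarrow> p + 1 = a \<and> q = a" "1 \<le> r \<longrightarrow> 1 \<le> q" "p + 1 \<le> a" "r + 1 \<le> a"
    using peak_imp_full right_imp_valley p_le r_le a_ge_2 by auto
  show ?thesis
    unfolding chi_peak chi_valley tog_valley sum_left_singletons sum_right_singletons
      sum_left_right_pairs sum_peak_right_pairs sum_triples index_ranges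
    using constraints a_ge_2 q_le by (cases b; cases "q = 0") auto
qed

end

theorem theorem5p8:
  fixes a :: nat and I :: "nat set"
  assumes "a \<ge> 2" and "I \<in> ideals a"
  shows "chi a a I - chi a (2*a) I =
      (\<Sum>i=1..a. - int i * tog a {i} I)
    - (int a - 1) * tog a {2*a} I
    + (\<Sum>i=1..a-1. - int i * tog a {3*a - i} I)
    + (\<Sum>i=1..a-1. \<Sum>j=0..i. int a * tog a {i, 2*a + j} I)
    + (\<Sum>j=1..a-1. int a * tog a {a, 2*a + j} I)
    + (\<Sum>i=1..a-1. - int a * tog a {i, 2*a - i, 2*a + i} I)"
proof -
  obtain p q r where "p \<le> a - 1" "q \<le> a" "r \<le> a - 1" "I = fence_ideal a p q r (a \<in> I)"
    using ideal_eq_fence_ideal[OF assms] .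
  then interpret fence_ideal_coords a p q r "a \<in> I" I
    using assms by unfold_locales
  show ?thesis by (rule chi_difference_expansion)
qed

end
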